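(* Let $n\ge2$, $\boldsymbol{\lambda}=(\lambda_1,\dots,\lambda_n)$ a vector of positive integers, $\ell=\mathrm{lcm}(\lambda_1,\dots,\lambda_{n-1})$ and $\boldsymbol{\lambda}'=(\lambda_1,\dots,\lambda_{n-1},\lambda_n+\ell)$. Let $(a_1,\dots,a_n,d)$ be a minimal generator of $M(\boldsymbol{\lambda})$ of type (4), and let $a_n'$ be the smallest integer such that $\frac{a_1}{\lambda_1}+\cdots+\frac{a_{n-1}}{\lambda_{n-1}}+\frac{a_n'}{\lambda_n+\ell}\ge d$. Then $a_n'=a_n+d\ell-\frac{\ell}{\lambda_1}a_1-\cdots-\frac{\ell}{\lambda_{n-1}}a_{n-1}$, and $(a_1,\dots,a_{n-1},a_n',d)$ is a minimal generator of $M(\boldsymbol{\lambda}')$ of type (4).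
   Context: For a vector $\boldsymbol{\mu}$ of $n$ positive integers, $M(\boldsymbol{\mu})=\{(a_1,\dots,a_n,d)\in\mathbb{N}^{n+1}\mid a_1/\mu_1+\cdots+a_n/\mu_n\ge d\}$. A minimal generator of $M(\boldsymbol{\mu})$ is a nonzero element that cannot be written as the sum of two nonzero elements of $M(\boldsymbol{\mu})$. A minimal generator $(a_1,\dots,a_n,d)$ is of type (4) if $d>0$ and $a_ia_n>0$ for some $1\le i<n$. *)

theory Defs
  imports Complex_Main
begin

text \<open>Vectors of length n are functions nat => nat indexed by 0..n-1, zero outside.
An element (a_1,...,a_n,d) of N^(n+1) is represented as a pair (a, d).\<close>

definition inM :: "nat \<Rightarrow> (nat \<Rightarrow> nat) \<Rightarrow> (nat \<Rightarrow> nat) \<Rightarrow> nat \<Rightarrow> bool" where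
  "inM n mu a d \<longleftrightarrow> (\<forall>i\<ge>n. a i = 0) \<and>
     (\<Sum>i<n. real (a i) / real (mu i)) \<ge> real d"

definition is_zero_elt :: "nat \<Rightarrow> (nat \<Rightarrow> nat) \<Rightarrow> nat \<Rightarrow> bool" where
  "is_zero_elt n a d \<longleftrightarrow> (\<forall>i<n. a i = 0) \<and> d = 0"

definition minimal_generator :: "nat \<Rightarrow> (nat \<Rightarrow> nat) \<Rightarrow> (nat \<Rightarrow> nat) \<Rightarrow> nat \<Rightarrow> bool" where
  "minimal_generator n mu a d \<longleftrightarrow> inM n mu a d \<and> \<not> is_zero_elt n a d \<and>
     \<not> (\<exists>b e c f. inM n mu b e \<and> inM n mu c f \<and> \<not> is_zero_elt n b e \<and>
          \<not> is_zero_elt n c f \<and> (\<forall>i<n. a i = b i + c i) \<and> d = e + f)"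

definition type4 :: "nat \<Rightarrow> (nat \<Rightarrow> nat) \<Rightarrow> nat \<Rightarrow> bool" where
  "type4 n a d \<longleftrightarrow> d > 0 \<and> (\<exists>i<n - 1. a i * a (n - 1) > 0)"

end

theory Submission
  imports Defs
begin

text \<open>Write n = m + 1 and S = a_1/lambda_1 + ... + a_m/lambda_m. For a weight mu > 0 on the last
coordinate, the least integer x with S + x/mu \<ge> d is ceiling (mu (d - S)), and for a minimal
generator with a_n > 0 and d > 0 the coordinate a_n is this least value, since otherwise one could
split off the unit vector e_n. As every lambda_i divides l, l (d - S) is an integer, so replacing
mu = lambda_n by lambda_n + l raises the ceiling by exactly l (d - S).
Minimality transfers because the map (b, e) \<mapsto> (b_1, ..., b_m, b_n - l (e - S(b)), e) is additive,
sends M(lambda') into M(lambda), sends nonzero elements to nonzero elements, and sends the new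
generator back to (a, d): a decomposition of the new generator would thus decompose (a, d).\<close>

lemma least_int_solution_eq_ceiling:
  fixes S c d :: real and x :: int
  assumes "c > 0" and "S + of_int x / c \<ge> d"
    and "\<forall>y::int. S + of_int y / c \<ge> d \<longrightarrow> x \<le> y"
  shows "x = \<lceil>c * (d - S)\<rceil>"
proof -
  have solution_iff: "S + of_int y / c \<ge> d \<longleftrightarrow> c * (d - S) \<le> of_int y" for y
    using \<open>c > 0\<close> by (auto simp: field_simps)
  show ?thesis
    using assms(2,3) solution_iff[of x] solution_iff[of "\<lceil>c * (d - S)\<rceil>"]
    by (simp add: ceiling_le_iff order_antisym)
qed

lemma inM_Suc:
  "inM (Suc m) mu b e \<longleftrightarrow> (\<forall>i>m. b i = 0) \<and>
     (\<Sum>i<m. real (b i) / real (mu i)) + real (b m) / real (mu m) \<ge> real e"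
  by (auto simp: inM_def Suc_le_eq)

lemma minimal_generator_last_eq_ceiling:
  assumes "mu m > 0" and gen: "minimal_generator (Suc m) mu a d" and "d > 0" and "a m > 0"
  shows "int (a m) = \<lceil>real (mu m) * (real d - (\<Sum>i<m. real (a i) / real (mu i)))\<rceil>"
proof (rule least_int_solution_eq_ceiling)
  let ?S = "\<Sum>i<m. real (a i) / real (mu i)"
  show "real (mu m) > 0" "?S + of_int (int (a m)) / real (mu m) \<ge> real d"
    using assms inM_Suc unfolding minimal_generator_def by auto
  show "\<forall>y::int. ?S + of_int y / real (mu m) \<ge> real d \<longrightarrow> int (a m) \<le> y"
  proof (intro allI impI, rule ccontr)
    fix y :: int
    assume sol: "?S + of_int y / real (mu m) \<ge> real d" and "\<not> int (a m) \<le> y"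
    then have "of_int y \<le> real (a m - 1)" using \<open>a m > 0\<close> by linarith
    then have "?S + real (a m - 1) / real (mu m) \<ge> real d"
      using sol divide_right_mono[of "of_int y" "real (a m - 1)" "real (mu m)"] by linarith
    then have "inM (Suc m) mu (a(m := a m - 1)) d"
      using gen unfolding minimal_generator_def inM_Suc by simp
    moreover have "inM (Suc m) mu ((\<lambda>_. 0)(m := 1)) 0"
      unfolding inM_Suc by (simp add: sum_nonneg)
    moreover have "\<forall>i<Suc m. a i = (a(m := a m - 1)) i + ((\<lambda>_. 0)(m := 1)) i"
      using \<open>a m > 0\<close> by auto
    moreover have "\<not> is_zero_elt (Suc m) (a(m := a m - 1)) d" "\<not> is_zero_elt (Suc m) ((\<lambda>_. 0)(m := 1)) 0"
      using \<open>d > 0\<close> unfolding is_zero_elt_def by auto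
    moreover have "d = d + 0" by simp
    ultimately show False
      using gen unfolding minimal_generator_def by blast
  qed
qed

definition lowered_last :: "nat \<Rightarrow> (nat \<Rightarrow> nat) \<Rightarrow> nat \<Rightarrow> (nat \<Rightarrow> nat) \<Rightarrow> nat \<Rightarrow> int" where
  "lowered_last m lam l b e = int (b m) + int (\<Sum>i<m. (l div lam i) * b i) - int l * int e"

lemma of_int_lowered_last:
  assumes "\<forall>i<m. lam i > 0" and "\<forall>i<m. lam i dvd l"
  shows "of_int (lowered_last m lam l b e) =
    real (b m) - real l * (real e - (\<Sum>i<m. real (b i) / real (lam i)))"
proof -
  have "real (\<Sum>i<m. (l div lam i) * b i) = (\<Sum>i<m. real l * (real (b i) / real (lam i)))"
    unfolding of_nat_sum using assms by (intro sum.cong) (auto simp: real_of_nat_div)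
  then show ?thesis
    unfolding lowered_last_def by (simp add: sum_distrib_left algebra_simps)
qed

lemma lowered_last_add:
  assumes "\<forall>i\<le>m. a i = b i + c i"
  shows "lowered_last m lam l a (e + f) = lowered_last m lam l b e + lowered_last m lam l c f"
proof -
  have "(\<Sum>i<m. (l div lam i) * a i) = (\<Sum>i<m. (l div lam i) * b i) + (\<Sum>i<m. (l div lam i) * c i)"
    using assms by (simp add: sum.distrib[symmetric] algebra_simps)
  then show ?thesis
    using assms unfolding lowered_last_def by (simp add: algebra_simps)
qed

lemma inM_lowered:
  assumes pos: "\<forall>i\<le>m. lam i > 0" and dvd: "\<forall>i<m. lam i dvd l"
    and mem: "inM (Suc m) (lam(m := lam m + l)) b e"
  shows "lowered_last m lam l b e \<ge> 0"
    and "inM (Suc m) lam (b(m := nat (lowered_last m lam l b e))) e"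
proof -
  define D where "D = real e - (\<Sum>i<m. real (b i) / real (lam i))"
  have "real (lam m) > 0" using pos by simp
  have "real (b m) \<ge> (real (lam m) + real l) * D"
    using mem \<open>real (lam m) > 0\<close> unfolding inM_Suc D_def by (simp add: field_simps)
  moreover have X: "of_int (lowered_last m lam l b e) = real (b m) - real l * D"
    unfolding D_def using pos dvd by (simp add: of_int_lowered_last)
  ultimately have ge: "of_int (lowered_last m lam l b e) \<ge> real (lam m) * D"
    by (simp add: algebra_simps)
  have "real l * D \<le> 0 \<or> real (lam m) * D \<ge> 0"
    by (cases "D \<ge> 0") (simp_all add: mult_nonneg_nonpos)
  then have "of_int (lowered_last m lam l b e) \<ge> (0::real)"
    using X ge by linarith
  then show nonneg: "lowered_last m lam l b e \<ge> 0" by simp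
  have "(\<Sum>i<m. real (b i) / real (lam i)) + of_int (lowered_last m lam l b e) / real (lam m) \<ge> real e"
    using ge \<open>real (lam m) > 0\<close> unfolding D_def by (simp add: field_simps)
  then show "inM (Suc m) lam (b(m := nat (lowered_last m lam l b e))) e"
    using mem nonneg unfolding inM_Suc by simp
qed

lemma is_zero_elt_lowered:
  assumes "is_zero_elt (Suc m) (b(m := nat (lowered_last m lam l b e))) e"
  shows "is_zero_elt (Suc m) b e"
proof -
  have "\<forall>i<m. b i = 0" and "e = 0"
    using assms unfolding is_zero_elt_def by (metis fun_upd_other less_SucI less_irrefl)+
  moreover from this have "lowered_last m lam l b e = int (b m)"
    unfolding lowered_last_def by simp
  ultimately show ?thesis
    using assms unfolding is_zero_elt_def by (auto simp: less_Suc_eq)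
qed

lemma minimal_generator_of_lowered:
  assumes pos: "\<forall>i\<le>m. lam i > 0" and dvd: "\<forall>i<m. lam i dvd l"
    and gen: "minimal_generator (Suc m) lam a d"
    and mem: "inM (Suc m) (lam(m := lam m + l)) a' d" and nonzero: "\<not> is_zero_elt (Suc m) a' d"
    and head: "\<forall>i<m. a' i = a i" and last: "lowered_last m lam l a' d = int (a m)"
  shows "minimal_generator (Suc m) (lam(m := lam m + l)) a' d"
  unfolding minimal_generator_def
proof (intro conjI notI mem nonzero, elim exE conjE)
  fix b e c f
  let ?lam' = "lam(m := lam m + l)"
  let ?b = "b(m := nat (lowered_last m lam l b e))" and ?c = "c(m := nat (lowered_last m lam l c f))"
  assume b: "inM (Suc m) ?lam' b e" "\<not> is_zero_elt (Suc m) b e"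
    and c: "inM (Suc m) ?lam' c f" "\<not> is_zero_elt (Suc m) c f"
    and sum: "\<forall>i<Suc m. a' i = b i + c i" and "d = e + f"
  have "lowered_last m lam l a' d = lowered_last m lam l b e + lowered_last m lam l c f"
    using sum \<open>d = e + f\<close> by (simp add: lowered_last_add)
  then have "\<forall>i<Suc m. a i = ?b i + ?c i"
    using sum head last inM_lowered(1)[OF pos dvd b(1)] inM_lowered(1)[OF pos dvd c(1)]
    by (auto simp: less_Suc_eq)
  moreover have "inM (Suc m) lam ?b e" "inM (Suc m) lam ?c f"
    using inM_lowered(2) pos dvd b(1) c(1) by blast+
  moreover have "\<not> is_zero_elt (Suc m) ?b e" "\<not> is_zero_elt (Suc m) ?c f"
    using is_zero_elt_lowered b(2) c(2) by blast+
  ultimately show False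
    using gen \<open>d = e + f\<close> unfolding minimal_generator_def by blast
qed

lemma least_lifted_last_coordinate:
  fixes m :: nat and lam a :: "nat \<Rightarrow> nat" and x :: int
  defines "S \<equiv> \<Sum>i<m. real (a i) / real (lam i)"
  assumes pos: "\<forall>i\<le>m. lam i > 0" and dvd: "\<forall>i<m. lam i dvd l"
    and gen: "minimal_generator (Suc m) lam a d" and "d > 0" and "a m > 0"
    and sol: "S + of_int x / real (lam m + l) \<ge> real d"
    and least: "\<forall>y::int. S + of_int y / real (lam m + l) \<ge> real d \<longrightarrow> x \<le> y"
  shows "of_int x = real (a m) + real l * (real d - S)"
    and "int (a m) \<le> x"
    and "lowered_last m lam l (a(m := nat x)) d = int (a m)"
proof -
  define k where "k = int (a m) - lowered_last m lam l a d"
  have k_eq: "real l * (real d - S) = of_int k"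
    unfolding k_def S_def using pos dvd by (simp add: of_int_lowered_last)
  have am: "int (a m) = \<lceil>real (lam m) * (real d - S)\<rceil>"
    unfolding S_def using pos gen \<open>d > 0\<close> \<open>a m > 0\<close> by (simp add: minimal_generator_last_eq_ceiling)
  moreover have "x = \<lceil>real (lam m + l) * (real d - S)\<rceil>"
    using pos sol least by (intro least_int_solution_eq_ceiling) auto
  moreover have "real (lam m + l) * (real d - S) = real (lam m) * (real d - S) + of_int k"
    using k_eq by (simp add: algebra_simps)
  ultimately have x: "x = int (a m) + k" by simp
  then show x_eq: "of_int x = real (a m) + real l * (real d - S)"
    using k_eq by simp
  have "real (lam m) * (real d - S) > 0"
    using am \<open>a m > 0\<close> by (metis of_nat_0_less_iff zero_less_ceiling)
  then have "real d - S > 0"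
    using pos by (simp add: zero_less_mult_iff)
  then have "k \<ge> 0"
    using k_eq by (metis of_int_0_le_iff of_nat_0_le_iff less_eq_real_def mult_nonneg_nonneg)
  then show "int (a m) \<le> x" using x by simp
  then have "real_of_int (lowered_last m lam l (a(m := nat x)) d) = real (a m)"
    using x_eq pos dvd unfolding S_def by (simp add: of_int_lowered_last)
  then show "lowered_last m lam l (a(m := nat x)) d = int (a m)" by linarith
qed

theorem proposition5p6:
  fixes n :: nat and lam :: "nat \<Rightarrow> nat" and a :: "nat \<Rightarrow> nat" and d :: nat
    and l :: nat and lam' :: "nat \<Rightarrow> nat" and an' :: int
  assumes "n \<ge> 2"
    and "\<forall>i<n. lam i > 0"
    and "l = Lcm (lam ` {..<n - 1})"
    and "lam' = lam(n - 1 := lam (n - 1) + l)"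
    and "minimal_generator n lam a d" and "type4 n a d"
    and "(\<Sum>i<n - 1. real (a i) / real (lam i)) + real_of_int an' / real (lam' (n - 1)) \<ge> real d"
    and "\<forall>y::int. (\<Sum>i<n - 1. real (a i) / real (lam i)) + real_of_int y / real (lam' (n - 1)) \<ge> real d
                   \<longrightarrow> an' \<le> y"
  shows "real_of_int an' = real (a (n - 1)) + real d * real l
            - (\<Sum>i<n - 1. real l / real (lam i) * real (a i))
         \<and> an' \<ge> 0 \<and> minimal_generator n lam' (a(n - 1 := nat an')) d
         \<and> type4 n (a(n - 1 := nat an')) d"
proof -
  obtain m where n: "n = Suc m" using assms(1) by (cases n) auto
  have pos: "\<forall>i\<le>m. lam i > 0" using assms(2) n by simp
  have dvd: "\<forall>i<m. lam i dvd l" using assms(3) n by (auto intro: dvd_Lcm)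
  have gen: "minimal_generator (Suc m) lam a d" using assms(5) n by simp
  obtain j where "j < m" "a j > 0" "a m > 0" "d > 0" using assms(6) n unfolding type4_def by auto
  note lifted = least_lifted_last_coordinate[OF pos dvd gen \<open>d > 0\<close> \<open>a m > 0\<close>, of an']
  have an': "of_int an' = real (a m) + real l * (real d - (\<Sum>i<m. real (a i) / real (lam i)))"
    and "int (a m) \<le> an'" and "lowered_last m lam l (a(m := nat an')) d = int (a m)"
    using lifted assms(4,7,8) n by auto
  moreover have "inM (Suc m) (lam(m := lam m + l)) (a(m := nat an')) d"
    using assms(4,7) gen \<open>int (a m) \<le> an'\<close> n unfolding minimal_generator_def inM_Suc by auto
  ultimately have "minimal_generator (Suc m) (lam(m := lam m + l)) (a(m := nat an')) d"
    using pos dvd gen \<open>d > 0\<close> by (intro minimal_generator_of_lowered) (auto simp: is_zero_elt_def)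
  moreover have "type4 (Suc m) (a(m := nat an')) d"
    using \<open>j < m\<close> \<open>a j > 0\<close> \<open>a m > 0\<close> \<open>int (a m) \<le> an'\<close> \<open>d > 0\<close>
    unfolding type4_def by (auto intro!: exI[of _ j])
  ultimately show ?thesis
    using an' \<open>int (a m) \<le> an'\<close> assms(4) n by (auto simp: algebra_simps sum_distrib_left)
qed

end
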